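(* Let $f,g\in Sym$ be symmetric functions of degree at most a positive integer $n$. If $f[\Xi_\mu]=g[\Xi_\mu]$ for all partitions $\mu$ with $|\mu|\le n$, then $f=g$ in $Sym$.
   Context: $Sym=\mathbb{Q}[p_1,p_2,\ldots]$ graded by $\deg p_k=k$. For $f\in Sym$ and a partition $\mu$, $f[\Xi_\mu]$ denotes $f$ evaluated at the multiset of eigenvalues of a permutation matrix of cycle type $\mu$, i.e. $p_k\mapsto\sum_i\sum_{j=0}^{\mu_i-1}e^{2\pi i jk/\mu_i}=\sum_{d\mid k}d\,m_d(\mu)$, with $m_d(\mu)$ the number of parts of $\mu$ equal to $d$ (for $\mu$ the empty partition all $p_k\mapsto0$). *)

theory Defs
  imports Complex_Main "HOL-Library.Poly_Mapping" "HOL-Library.Multiset"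
begin

text \<open>Sym = Q[p_1,p_2,...] is represented as polynomials in countably many variables:
  a finitely supported map from monomials (finitely supported exponent vectors
  x) to rational coefficients. Variable index k stands for the
  power sum p_(k+1), so every variable is one of p_1, p_2, ...\<close>

type_synonym sym = "(nat \<Rightarrow>\<^sub>0 nat) \<Rightarrow>\<^sub>0 rat"

definition mon_deg :: "(nat \<Rightarrow>\<^sub>0 nat) \<Rightarrow> nat" where
  "mon_deg m = (\<Sum>k\<in>Poly_Mapping.keys m. Suc k * Poly_Mapping.lookup m k)"

definition sym_deg_le :: "sym \<Rightarrow> nat \<Rightarrow> bool" where
  "sym_deg_le f n \<longleftrightarrow> (\<forall>m\<in>Poly_Mapping.keys f. mon_deg m \<le> n)"

definition is_partition :: "nat multiset \<Rightarrow> bool" where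
  "is_partition \<mu> \<longleftrightarrow> (\<forall>x\<in>#\<mu>. 0 < x)"

definition pk_Xi :: "nat \<Rightarrow> nat multiset \<Rightarrow> rat" where
  "pk_Xi k \<mu> = (\<Sum>d | d dvd k \<and> 0 < d. of_nat (d * count \<mu> d))"

definition eval_Xi :: "sym \<Rightarrow> nat multiset \<Rightarrow> rat" where
  "eval_Xi f \<mu> = (\<Sum>m\<in>Poly_Mapping.keys f. Poly_Mapping.lookup f m * (\<Prod>k\<in>Poly_Mapping.keys m. pk_Xi (Suc k) \<mu> ^ Poly_Mapping.lookup m k))"

end

theory Submission
  imports Defs "HOL-Computational_Algebra.Polynomial"
begin

text \<open>Regard a symmetric function as a function of the point \<open>x\<close> with \<open>x k = p\<^sub>k\<^sub>+\<^sub>1\<close>.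
  Adding a part \<open>d\<close> to \<open>\<mu>\<close> translates \<open>\<Xi>\<^sub>\<mu>\<close> by \<open>d\<close> in the coordinates \<open>k\<close> with \<open>d dvd k + 1\<close>.
  Monomials of weighted degree \<open>\<le> N\<close> have finite-difference degree \<open>\<le> N\<close>: the difference
  along the translation for a part \<open>d\<close> lowers this degree by \<open>d\<close> and annihilates the function
  when \<open>d > N\<close>. By induction on \<open>N\<close>, a function of difference degree \<open>\<le> N\<close> that vanishes at
  all \<open>\<Xi>\<^sub>\<mu>\<close> with \<open>|\<mu>| \<le> N\<close> vanishes at all \<open>\<Xi>\<^sub>\<mu>\<close>. Finally a polynomial in \<open>p\<^sub>1, \<dots>, p\<^sub>r\<close>
  vanishing at all \<open>\<Xi>\<^sub>\<mu>\<close> with parts \<open>\<le> r\<close> is zero: adding copies of the part \<open>r\<close> moves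
  only \<open>p\<^sub>r\<close>, along an infinite arithmetic progression.\<close>

definition Xi_point :: "nat multiset \<Rightarrow> nat \<Rightarrow> rat" where
  "Xi_point \<mu> k = pk_Xi (Suc k) \<mu>"

definition shift :: "nat \<Rightarrow> (nat \<Rightarrow> rat) \<Rightarrow> nat \<Rightarrow> rat" where
  "shift d x = (\<lambda>k. x k + (if d dvd Suc k then of_nat d else 0))"

lemma shift_commute: "shift d (shift e x) = shift e (shift d x)"
  by (auto simp: shift_def)

lemma Xi_point_add_mset:
  assumes "0 < d"
  shows "Xi_point (add_mset d \<mu>) = shift d (Xi_point \<mu>)"
proof
  fix k
  let ?D = "{e. e dvd Suc k \<and> 0 < e}"
  have "finite ?D"
    by (rule finite_subset[of _ "{..Suc k}"]) (auto dest: dvd_imp_le)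
  have "(of_nat (e * count (add_mset d \<mu>) e) :: rat) =
        of_nat (e * count \<mu> e) + (if e = d then of_nat d else 0)" for e
    by (auto simp: algebra_simps)
  then have "Xi_point (add_mset d \<mu>) k =
      (\<Sum>e\<in>?D. of_nat (e * count \<mu> e)) + (\<Sum>e\<in>?D. if e = d then of_nat d else 0)"
    by (simp add: Xi_point_def pk_Xi_def sum.distrib)
  also have "(\<Sum>e\<in>?D. if e = d then (of_nat d :: rat) else 0) = (if d dvd Suc k then of_nat d else 0)"
    using \<open>finite ?D\<close> assms by (simp add: sum.delta')
  finally show "Xi_point (add_mset d \<mu>) k = shift d (Xi_point \<mu>) k"
    by (simp add: shift_def Xi_point_def pk_Xi_def)
qed

lemma Xi_point_add_replicate_mset:
  assumes "0 < d"
  shows "Xi_point (\<mu> + replicate_mset t d) k =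
    Xi_point \<mu> k + (if d dvd Suc k then of_nat (d * t) else 0)"
proof (induction t)
  case (Suc t)
  then show ?case
    by (simp add: Xi_point_add_mset[OF assms] shift_def algebra_simps)
qed simp

definition diff :: "nat \<Rightarrow> ((nat \<Rightarrow> rat) \<Rightarrow> rat) \<Rightarrow> (nat \<Rightarrow> rat) \<Rightarrow> rat" where
  "diff d \<phi> = (\<lambda>x. \<phi> (shift d x) - \<phi> x)"

lemma diff_add: "diff d (\<lambda>x. \<phi> x + \<psi> x) = (\<lambda>x. diff d \<phi> x + diff d \<psi> x)"
  by (simp add: diff_def algebra_simps)

lemma diff_mult:
  "diff d (\<lambda>x. \<phi> x * \<psi> x) = (\<lambda>x. diff d \<phi> x * \<psi> (shift d x) + \<phi> x * diff d \<psi> x)"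
  by (simp add: diff_def algebra_simps)

lemma diff_shift: "diff d (\<lambda>x. \<phi> (shift e x)) = (\<lambda>x. diff d \<phi> (shift e x))"
  by (simp add: diff_def shift_commute)

text \<open>A weighted degree bound (\<open>x k\<close> of weight \<open>k + 1\<close>) phrased through the difference
  operators alone, so that no multivariate polynomials are needed.\<close>

inductive diff_degree_le :: "nat \<Rightarrow> ((nat \<Rightarrow> rat) \<Rightarrow> rat) \<Rightarrow> bool" where
  "(\<And>d. 0 < d \<Longrightarrow> d \<le> N \<Longrightarrow> diff_degree_le (N - d) (diff d \<phi>))
   \<Longrightarrow> (\<And>d. N < d \<Longrightarrow> diff d \<phi> = (\<lambda>_. 0)) \<Longrightarrow> diff_degree_le N \<phi>"

lemma diff_degree_leD:
  assumes "diff_degree_le N \<phi>"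
  shows "0 < d \<Longrightarrow> d \<le> N \<Longrightarrow> diff_degree_le (N - d) (diff d \<phi>)"
    and "N < d \<Longrightarrow> diff d \<phi> = (\<lambda>_. 0)"
  using assms by (auto elim: diff_degree_le.cases)

lemma diff_degree_le_zero: "diff_degree_le N (\<lambda>_. 0)"
proof (induction N rule: less_induct)
  case (less N)
  show ?case
    by (rule diff_degree_le.intros) (auto simp: diff_def intro: less)
qed

lemma diff_degree_le_const: "diff_degree_le N (\<lambda>_. c)"
  by (rule diff_degree_le.intros) (auto simp: diff_def intro: diff_degree_le_zero)

lemma diff_degree_le_mono:
  "diff_degree_le a \<phi> \<Longrightarrow> a \<le> b \<Longrightarrow> diff_degree_le b \<phi>"
proof (induction arbitrary: b rule: diff_degree_le.induct)
  case (1 N \<phi>)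
  show ?case
  proof (rule diff_degree_le.intros)
    fix d assume d: "0 < d" "d \<le> b"
    show "diff_degree_le (b - d) (diff d \<phi>)"
    proof (cases "d \<le> N")
      case True
      then show ?thesis using "1.IH" d "1.prems" by simp
    qed (simp add: "1.hyps"(2) diff_degree_le_zero)
  next
    fix d assume "b < d"
    then show "diff d \<phi> = (\<lambda>_. 0)" using "1.hyps"(2) "1.prems" by simp
  qed
qed

lemma diff_degree_le_add:
  "diff_degree_le N \<phi> \<Longrightarrow> diff_degree_le N \<psi> \<Longrightarrow> diff_degree_le N (\<lambda>x. \<phi> x + \<psi> x)"
proof (induction arbitrary: \<psi> rule: diff_degree_le.induct)
  case (1 N \<phi>)
  note \<psi> = diff_degree_leD[OF "1.prems"]
  show ?case
  proof (rule diff_degree_le.intros)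
    fix d assume "0 < d" "d \<le> N"
    then show "diff_degree_le (N - d) (diff d (\<lambda>x. \<phi> x + \<psi> x))"
      unfolding diff_add by (intro "1.IH" \<psi>(1))
  next
    fix d assume "N < d"
    then show "diff d (\<lambda>x. \<phi> x + \<psi> x) = (\<lambda>_. 0)"
      unfolding diff_add by (simp add: "1.hyps"(2) \<psi>(2))
  qed
qed

lemma diff_degree_le_sum:
  "finite A \<Longrightarrow> (\<And>i. i \<in> A \<Longrightarrow> diff_degree_le N (f i))
    \<Longrightarrow> diff_degree_le N (\<lambda>x. \<Sum>i\<in>A. f i x)"
  by (induction A rule: finite_induct) (auto intro: diff_degree_le_zero diff_degree_le_add)

lemma diff_degree_le_shift:
  "diff_degree_le N \<phi> \<Longrightarrow> diff_degree_le N (\<lambda>x. \<phi> (shift e x))"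
proof (induction rule: diff_degree_le.induct)
  case (1 N \<phi>)
  show ?case
  proof (rule diff_degree_le.intros)
    fix d assume "0 < d" "d \<le> N"
    then show "diff_degree_le (N - d) (diff d (\<lambda>x. \<phi> (shift e x)))"
      unfolding diff_shift by (rule "1.IH")
  next
    fix d assume "N < d"
    then show "diff d (\<lambda>x. \<phi> (shift e x)) = (\<lambda>_. 0)"
      unfolding diff_shift by (simp add: "1.hyps"(2))
  qed
qed

lemma diff_degree_le_mult:
  assumes "diff_degree_le a \<phi>" "diff_degree_le b \<psi>"
  shows "diff_degree_le (a + b) (\<lambda>x. \<phi> x * \<psi> x)"
  using assms
proof (induction "a + b" arbitrary: a b \<phi> \<psi> rule: less_induct)
  case less
  note \<phi> = diff_degree_leD[OF less.prems(1)] and \<psi> = diff_degree_leD[OF less.prems(2)]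
  show ?case
  proof (rule diff_degree_le.intros)
    fix d assume d: "0 < d" "d \<le> a + b"
    have left: "diff_degree_le (a + b - d) (\<lambda>x. diff d \<phi> x * \<psi> (shift d x))"
    proof (cases "d \<le> a")
      case True
      have "diff_degree_le (a - d + b) (\<lambda>x. diff d \<phi> x * \<psi> (shift d x))"
        using less.hyps[of "a - d" b] d True \<phi>(1) diff_degree_le_shift[OF less.prems(2)] by simp
      then show ?thesis using True by (simp add: add.commute add_diff_assoc2)
    next
      case False
      then show ?thesis by (simp add: \<phi>(2) diff_degree_le_zero)
    qed
    have right: "diff_degree_le (a + b - d) (\<lambda>x. \<phi> x * diff d \<psi> x)"
    proof (cases "d \<le> b")
      case True
      have "diff_degree_le (a + (b - d)) (\<lambda>x. \<phi> x * diff d \<psi> x)"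
        using less.hyps[of a "b - d"] d True less.prems(1) \<psi>(1) by simp
      then show ?thesis using True by simp
    next
      case False
      then show ?thesis by (simp add: \<psi>(2) diff_degree_le_zero)
    qed
    show "diff_degree_le (a + b - d) (diff d (\<lambda>x. \<phi> x * \<psi> x))"
      unfolding diff_mult by (rule diff_degree_le_add[OF left right])
  next
    fix d assume "a + b < d"
    then show "diff d (\<lambda>x. \<phi> x * \<psi> x) = (\<lambda>_. 0)"
      unfolding diff_mult by (simp add: \<phi>(2) \<psi>(2))
  qed
qed

lemma diff_degree_le_prod:
  "finite A \<Longrightarrow> (\<And>i. i \<in> A \<Longrightarrow> diff_degree_le (w i) (f i))
    \<Longrightarrow> diff_degree_le (\<Sum>i\<in>A. w i) (\<lambda>x. \<Prod>i\<in>A. f i x)"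
  by (induction A rule: finite_induct)
    (auto intro: diff_degree_le_const diff_degree_le_mult)

lemma diff_degree_le_power:
  "diff_degree_le a \<phi> \<Longrightarrow> diff_degree_le (a * j) (\<lambda>x. \<phi> x ^ j)"
  by (induction j) (auto intro: diff_degree_le_const diff_degree_le_mult)

lemma diff_degree_le_coordinate: "diff_degree_le (Suc k) (\<lambda>x. x k)"
proof (rule diff_degree_le.intros)
  fix d assume "0 < d" "d \<le> Suc k"
  have "diff d (\<lambda>x. x k) = (\<lambda>_. if d dvd Suc k then of_nat d else 0)"
    by (simp add: diff_def shift_def)
  then show "diff_degree_le (Suc k - d) (diff d (\<lambda>x. x k))"
    by (simp add: diff_degree_le_const)
next
  fix d assume "Suc k < d"
  then have "\<not> d dvd Suc k" by (auto dest: dvd_imp_le)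
  then show "diff d (\<lambda>x. x k) = (\<lambda>_. 0)" by (simp add: diff_def shift_def)
qed

lemma diff_degree_le_vanishing_on_partitions:
  assumes "diff_degree_le N \<phi>"
    and "\<And>\<mu>. is_partition \<mu> \<Longrightarrow> sum_mset \<mu> \<le> N \<Longrightarrow> \<phi> (Xi_point \<mu>) = 0"
    and "is_partition \<mu>"
  shows "\<phi> (Xi_point \<mu>) = 0"
  using assms
proof (induction arbitrary: \<mu> rule: diff_degree_le.induct)
  case (1 N \<phi>)
  have step: "\<phi> (Xi_point (add_mset d \<nu>)) = \<phi> (Xi_point \<nu>)"
    if d: "0 < d" and \<nu>: "is_partition \<nu>" for d \<nu>
  proof -
    have "diff d \<phi> (Xi_point \<nu>) = 0"
    proof (cases "d \<le> N")
      case True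
      have "diff d \<phi> (Xi_point \<kappa>) = 0" if "is_partition \<kappa>" "sum_mset \<kappa> \<le> N - d" for \<kappa>
        using that d True "1.prems"(1)[of \<kappa>] "1.prems"(1)[of "add_mset d \<kappa>"]
        by (auto simp: is_partition_def diff_def Xi_point_add_mset[symmetric])
      then show ?thesis using "1.IH"[OF d True] \<nu> by blast
    qed (use "1.hyps"(2) in simp)
    then show ?thesis by (simp add: diff_def Xi_point_add_mset[OF d])
  qed
  from \<open>is_partition \<mu>\<close> show ?case
  proof (induction \<mu>)
    case empty
    then show ?case using "1.prems"(1) by simp
  next
    case (add d \<mu>)
    then show ?case using step by (simp add: is_partition_def)
  qed
qed

definition mon_value :: "nat \<Rightarrow> (nat \<Rightarrow> rat) \<Rightarrow> (nat \<Rightarrow>\<^sub>0 nat) \<Rightarrow> rat" where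
  "mon_value r x m = (\<Prod>k<r. x k ^ Poly_Mapping.lookup m k)"

lemma diff_degree_le_mon_value:
  "diff_degree_le (\<Sum>k<r. Suc k * Poly_Mapping.lookup m k) (\<lambda>x. mon_value r x m)"
  unfolding mon_value_def
  by (rule diff_degree_le_prod) (auto intro: diff_degree_le_power[OF diff_degree_le_coordinate, simplified])

lemma mon_value_Suc:
  "mon_value (Suc r) x m = mon_value r x m * x r ^ Poly_Mapping.lookup m r"
  by (simp add: mon_value_def)

lemma mon_value_cong: "(\<And>k. k < r \<Longrightarrow> x k = y k) \<Longrightarrow> mon_value r x m = mon_value r y m"
  by (simp add: mon_value_def)

lemma poly_eq_0_if_vanishing_on_progression:
  fixes p :: "'a :: field_char_0 poly"
  assumes "b \<noteq> 0" and "\<And>t. poly p (a + of_nat t * b) = 0"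
  shows "p = 0"
proof (rule ccontr)
  assume "p \<noteq> 0"
  have "inj (\<lambda>t. a + of_nat t * b)"
    using \<open>b \<noteq> 0\<close> by (auto intro: injI)
  then have "infinite (range (\<lambda>t. a + of_nat t * b))"
    by (rule range_inj_infinite)
  moreover have "range (\<lambda>t. a + of_nat t * b) \<subseteq> {x. poly p x = 0}"
    using assms(2) by auto
  ultimately show False
    using poly_roots_finite[OF \<open>p \<noteq> 0\<close>] finite_subset by blast
qed

lemma fibre_sum_vanishing_on_bounded_parts:
  assumes "finite S"
    and "\<And>\<mu>. is_partition \<mu> \<Longrightarrow> (\<forall>d\<in>#\<mu>. d \<le> Suc r)
           \<Longrightarrow> (\<Sum>m\<in>S. c m * mon_value (Suc r) (Xi_point \<mu>) m) = 0"
    and \<mu>: "is_partition \<mu>" "\<forall>d\<in>#\<mu>. d \<le> r"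
  shows "(\<Sum>m\<in>{m\<in>S. Poly_Mapping.lookup m r = j}. c m * mon_value r (Xi_point \<mu>) m) = 0"
proof -
  define p :: "rat poly" where
    "p = (\<Sum>m\<in>S. monom (c m * mon_value r (Xi_point \<mu>) m) (Poly_Mapping.lookup m r))"
  have "poly p (Xi_point \<mu> r + of_nat t * of_nat (Suc r)) = 0" for t
  proof -
    let ?\<nu> = "\<mu> + replicate_mset t (Suc r)"
    have "mon_value r (Xi_point ?\<nu>) m = mon_value r (Xi_point \<mu>) m" for m
      by (rule mon_value_cong) (auto simp: Xi_point_add_replicate_mset dest: dvd_imp_le)
    moreover have "Xi_point ?\<nu> r = Xi_point \<mu> r + of_nat t * of_nat (Suc r)"
      by (simp add: Xi_point_add_replicate_mset algebra_simps)
    ultimately have "mon_value (Suc r) (Xi_point ?\<nu>) m = mon_value r (Xi_point \<mu>) m *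
        (Xi_point \<mu> r + of_nat t * of_nat (Suc r)) ^ Poly_Mapping.lookup m r" for m
      by (simp add: mon_value_Suc)
    moreover have "(\<Sum>m\<in>S. c m * mon_value (Suc r) (Xi_point ?\<nu>) m) = 0"
      using \<mu> by (intro assms(2)) (auto simp: is_partition_def)
    ultimately show ?thesis
      by (simp add: p_def poly_sum poly_monom mult.assoc)
  qed
  then have "p = 0"
    by (intro poly_eq_0_if_vanishing_on_progression[of "of_nat (Suc r)"]) auto
  then have "coeff p j = 0" by simp
  then show ?thesis
    using assms(1) by (simp add: p_def coeff_sum sum.inter_filter)
qed

text \<open>Injectivity says that the monomials in \<open>S\<close> are determined by their exponents of
  \<open>p\<^sub>1, \<dots>, p\<^sub>r\<close>, so that the sum is a polynomial in these variables with coefficients \<open>c\<close>.\<close>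

lemma coeff_eq_0_if_vanishing_on_bounded_parts:
  assumes "finite S"
    and "inj_on (\<lambda>m. map (Poly_Mapping.lookup m) [0..<r]) S"
    and "\<And>\<mu>. is_partition \<mu> \<Longrightarrow> (\<forall>d\<in>#\<mu>. d \<le> r)
           \<Longrightarrow> (\<Sum>m\<in>S. c m * mon_value r (Xi_point \<mu>) m) = 0"
    and "m \<in> S"
  shows "c m = 0"
  using assms
proof (induction r arbitrary: S m)
  case 0
  then have "S = {m}" by (auto simp: inj_on_def)
  then show ?case
    using "0.prems"(3)[of "{#}"] by (simp add: is_partition_def mon_value_def)
next
  case (Suc r)
  define S' where "S' = {m'\<in>S. Poly_Mapping.lookup m' r = Poly_Mapping.lookup m r}"
  have "finite S'" "m \<in> S'"
    using Suc.prems(1,4) by (auto simp: S'_def)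
  moreover have "inj_on (\<lambda>m. map (Poly_Mapping.lookup m) [0..<r]) S'"
    using Suc.prems(2) by (auto simp: inj_on_def S'_def)
  moreover have "(\<Sum>m'\<in>S'. c m' * mon_value r (Xi_point \<mu>) m') = 0"
    if "is_partition \<mu>" "\<forall>d\<in>#\<mu>. d \<le> r" for \<mu>
    unfolding S'_def using Suc.prems(1,3) that by (rule fibre_sum_vanishing_on_bounded_parts)
  ultimately show ?case
    by (intro Suc.IH[of S']) auto
qed

lemma keys_subset_if_sym_deg_le:
  assumes "sym_deg_le h n" "m \<in> Poly_Mapping.keys h"
  shows "Poly_Mapping.keys m \<subseteq> {..<n}"
proof
  fix k assume k: "k \<in> Poly_Mapping.keys m"
  then have "Suc k * 1 \<le> Suc k * Poly_Mapping.lookup m k"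
    by (intro mult_le_mono2) (simp add: in_keys_iff)
  also have "\<dots> \<le> mon_deg m"
    unfolding mon_deg_def using k by (intro member_le_sum) auto
  also have "mon_deg m \<le> n"
    using assms by (simp add: sym_deg_le_def)
  finally show "k \<in> {..<n}"
    by simp
qed

lemma mon_deg_eq_sum_lessThan:
  "Poly_Mapping.keys m \<subseteq> {..<n} \<Longrightarrow> mon_deg m = (\<Sum>k<n. Suc k * Poly_Mapping.lookup m k)"
  unfolding mon_deg_def by (rule sum.mono_neutral_left) (auto simp: in_keys_iff)

lemma mon_value_eq_prod_keys:
  "Poly_Mapping.keys m \<subseteq> {..<n} \<Longrightarrow>
    mon_value n x m = (\<Prod>k\<in>Poly_Mapping.keys m. x k ^ Poly_Mapping.lookup m k)"
  unfolding mon_value_def by (rule prod.mono_neutral_right) (auto simp: in_keys_iff)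

definition poly_value :: "nat \<Rightarrow> sym \<Rightarrow> (nat \<Rightarrow> rat) \<Rightarrow> rat" where
  "poly_value n h x = (\<Sum>m\<in>Poly_Mapping.keys h. Poly_Mapping.lookup h m * mon_value n x m)"

lemma eval_Xi_eq_poly_value:
  assumes "sym_deg_le h n"
  shows "eval_Xi h \<mu> = poly_value n h (Xi_point \<mu>)"
  unfolding eval_Xi_def poly_value_def
  by (intro sum.cong refl)
    (simp add: mon_value_eq_prod_keys[OF keys_subset_if_sym_deg_le[OF assms]] Xi_point_def)

lemma diff_degree_le_poly_value:
  assumes "sym_deg_le h n"
  shows "diff_degree_le n (poly_value n h)"
  unfolding poly_value_def
proof (intro diff_degree_le_sum finite_keys)
  fix m assume m: "m \<in> Poly_Mapping.keys h"
  have "(\<Sum>k<n. Suc k * Poly_Mapping.lookup m k) = mon_deg m"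
    by (rule mon_deg_eq_sum_lessThan[OF keys_subset_if_sym_deg_le[OF assms m], symmetric])
  also have "\<dots> \<le> n"
    using assms m by (simp add: sym_deg_le_def)
  finally have deg: "(\<Sum>k<n. Suc k * Poly_Mapping.lookup m k) \<le> n" .
  have "diff_degree_le (0 + (\<Sum>k<n. Suc k * Poly_Mapping.lookup m k))
      (\<lambda>x. Poly_Mapping.lookup h m * mon_value n x m)"
    by (rule diff_degree_le_mult[OF diff_degree_le_const diff_degree_le_mon_value])
  then show "diff_degree_le n (\<lambda>x. Poly_Mapping.lookup h m * mon_value n x m)"
    by (rule diff_degree_le_mono) (use deg in simp)
qed

lemma inj_on_exponents_if_sym_deg_le:
  assumes "sym_deg_le h n"
  shows "inj_on (\<lambda>m. map (Poly_Mapping.lookup m) [0..<n]) (Poly_Mapping.keys h)"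
proof (rule inj_onI, rule poly_mapping_eqI)
  fix m1 m2 k
  assume m: "m1 \<in> Poly_Mapping.keys h" "m2 \<in> Poly_Mapping.keys h"
    and eq: "map (Poly_Mapping.lookup m1) [0..<n] = map (Poly_Mapping.lookup m2) [0..<n]"
  show "Poly_Mapping.lookup m1 k = Poly_Mapping.lookup m2 k"
  proof (cases "k < n")
    case True
    then show ?thesis using eq by (simp add: map_eq_conv)
  next
    case False
    then have "k \<notin> Poly_Mapping.keys m1" "k \<notin> Poly_Mapping.keys m2"
      using keys_subset_if_sym_deg_le[OF assms m(1)] keys_subset_if_sym_deg_le[OF assms m(2)]
      by auto
    then show ?thesis by (simp add: in_keys_iff)
  qed
qed

lemma eval_Xi_diff: "eval_Xi (f - g) \<mu> = eval_Xi f \<mu> - eval_Xi g \<mu>"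
proof -
  let ?S = "Poly_Mapping.keys f \<union> Poly_Mapping.keys g"
  let ?t = "\<lambda>m. \<Prod>k\<in>Poly_Mapping.keys m. pk_Xi (Suc k) \<mu> ^ Poly_Mapping.lookup m k"
  have "eval_Xi h \<mu> = (\<Sum>m\<in>?S. Poly_Mapping.lookup h m * ?t m)"
    if "Poly_Mapping.keys h \<subseteq> ?S" for h
    unfolding eval_Xi_def using that
    by (intro sum.mono_neutral_left) (auto simp: in_keys_iff)
  then show ?thesis
    using keys_diff[of f g]
    by (simp add: lookup_minus left_diff_distrib sum_subtractf)
qed

lemma sym_deg_le_diff: "sym_deg_le f n \<Longrightarrow> sym_deg_le g n \<Longrightarrow> sym_deg_le (f - g) n"
  using keys_diff[of f g] by (auto simp: sym_deg_le_def)

lemma sym_eq_0_if_vanishing_on_small_partitions: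
  assumes "sym_deg_le h n"
    and "\<And>\<mu>. is_partition \<mu> \<Longrightarrow> sum_mset \<mu> \<le> n \<Longrightarrow> eval_Xi h \<mu> = 0"
  shows "h = 0"
proof -
  have "poly_value n h (Xi_point \<mu>) = 0" if "is_partition \<mu>" for \<mu>
  proof (rule diff_degree_le_vanishing_on_partitions[OF diff_degree_le_poly_value[OF assms(1)] _ that])
    fix \<kappa> assume "is_partition \<kappa>" "sum_mset \<kappa> \<le> n"
    then show "poly_value n h (Xi_point \<kappa>) = 0"
      using assms(2) eval_Xi_eq_poly_value[OF assms(1)] by simp
  qed
  then have "Poly_Mapping.lookup h m = 0" if "m \<in> Poly_Mapping.keys h" for m
    using that inj_on_exponents_if_sym_deg_le[OF assms(1)]
    by (intro coeff_eq_0_if_vanishing_on_bounded_parts[OF finite_keys,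
          where r = n and c = "Poly_Mapping.lookup h"])
      (auto simp: poly_value_def)
  then show ?thesis
    by (metis poly_mapping_eqI in_keys_iff lookup_zero)
qed

theorem proposition54:
  fixes f g :: sym and n :: nat
  assumes "0 < n"
    and "sym_deg_le f n" and "sym_deg_le g n"
    and "\<forall>\<mu>. is_partition \<mu> \<and> sum_mset \<mu> \<le> n \<longrightarrow> eval_Xi f \<mu> = eval_Xi g \<mu>"
  shows "f = g"
proof -
  have "f - g = 0"
    using assms(4)
    by (intro sym_eq_0_if_vanishing_on_small_partitions[OF sym_deg_le_diff[OF assms(2,3)]])
      (simp add: eval_Xi_diff)
  then show ?thesis by simp
qed

end
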